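(* Consider the Data Revocation Game with negligible unlearning cost, and assume $d_i^{\max}=d^{\max}$ for all $i$ and $m_1<m_2<\dots<m_I$, where $m_i=(\xi_i\ell_i)^{-1}-\epsilon_i$. Then every Nash equilibrium $(d_i^* )$ satisfies $d_1^*\le d_2^*\le\dots\le d_I^*$.
   Context: Data Revocation Game with negligible unlearning cost: a finite set of users $\mathcal I=\{1,\dots,I\}$, $I\ge 2$, each with parameters $d_i^{\max}>0$, $\epsilon_i>0$, $\xi_i>0$, $\ell_i>0$. Each user chooses $d_i\in[0,d_i^{\max}]$, with payoff $U_i(d_i,\boldsymbol{d_{-i}})=\ln\big(\sum_{j\in\mathcal I}d_j+\epsilon_i\big)-\xi_i d_i\ell_i$. A Nash equilibrium is a profile $(d_i^* )$ with $d_i^*\in[0,d_i^{\max}]$ and $U_i(d_i^*,\boldsymbol{d_{-i}^*})\ge U_i(d_i,\boldsymbol{d_{-i}^*})$ for all $i$ and $d_i\in[0,d_i^{\max}]$. The quantity $m_i=(\xi_i\ell_i)^{-1}-\epsilon_i$ is called the remaining metric of user $i$. *)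

theory Defs
  imports Complex_Main
begin

text \<open>Data Revocation Game with negligible unlearning cost. Users are 1..I.
  A strategy profile is d :: nat => real (only values on {1..I} matter).\<close>

definition payoff ::
  "nat \<Rightarrow> (nat \<Rightarrow> real) \<Rightarrow> (nat \<Rightarrow> real) \<Rightarrow> (nat \<Rightarrow> real) \<Rightarrow> nat \<Rightarrow> (nat \<Rightarrow> real) \<Rightarrow> real"
  where "payoff I eps xi ell i d = ln ((\<Sum>j\<in>{1..I}. d j) + eps i) - xi i * d i * ell i"

definition nash_eq ::
  "nat \<Rightarrow> (nat \<Rightarrow> real) \<Rightarrow> (nat \<Rightarrow> real) \<Rightarrow> (nat \<Rightarrow> real) \<Rightarrow> (nat \<Rightarrow> real) \<Rightarrow> (nat \<Rightarrow> real) \<Rightarrow> bool"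
  where "nash_eq I dmax eps xi ell d \<longleftrightarrow>
    (\<forall>i\<in>{1..I}. d i \<in> {0..dmax i}) \<and>
    (\<forall>i\<in>{1..I}. \<forall>x\<in>{0..dmax i}. payoff I eps xi ell i d \<ge> payoff I eps xi ell i (d(i := x)))"

definition remaining_metric :: "(nat \<Rightarrow> real) \<Rightarrow> (nat \<Rightarrow> real) \<Rightarrow> (nat \<Rightarrow> real) \<Rightarrow> nat \<Rightarrow> real"
  where "remaining_metric eps xi ell i = inverse (xi i * ell i) - eps i"

end

theory Submission
  imports Defs
begin

text \<open>A user i with positive contribution d_i can withdraw a little, and a user j with
  d_j below the cap can add a little. At an equilibrium neither deviation pays, and by concavity
  of ln this forces the total contribution S to satisfy S \<le> m_i and m_j \<le> S respectively.
  If d_i > d_(i+1) under a common cap, both deviations are available to users i and i + 1,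
  so m_(i+1) \<le> S \<le> m_i, contradicting m_i < m_(i+1).\<close>

lemma sum_fun_upd:
  fixes d :: "'a \<Rightarrow> 'b::ab_group_add"
  assumes "finite A" "i \<in> A"
  shows "sum (d(i := x)) A = sum d A - d i + x"
proof -
  have "sum (d(i := x)) A = x + sum (d(i := x)) (A - {i})"
    using assms by (simp add: sum.remove)
  also have "sum (d(i := x)) (A - {i}) = sum d (A - {i})"
    by (rule sum.cong) auto
  also have "sum d (A - {i}) = sum d A - d i"
    using assms by (simp add: sum_diff1)
  finally show ?thesis by simp
qed

lemma ln_add_diff_le:
  fixes a t :: real
  assumes "a > 0" "t \<ge> 0"
  shows "ln (a + t) - ln a \<le> t / a"
proof -
  have "ln ((a + t) / a) \<le> (a + t) / a - 1"
    using assms by (intro ln_le_minus_one) auto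
  then show ?thesis
    using assms by (simp add: ln_div field_simps)
qed

lemma ln_add_diff_ge:
  fixes a t :: real
  assumes "a > 0" "t \<ge> 0"
  shows "t / (a + t) \<le> ln (a + t) - ln a"
proof -
  have "ln (a / (a + t)) \<le> a / (a + t) - 1"
    using assms by (intro ln_le_minus_one) auto
  then show ?thesis
    using assms by (simp add: ln_div field_simps)
qed

lemma payoff_fun_upd:
  assumes "i \<in> {1..I}"
  shows "payoff I eps xi ell i (d(i := x))
    = ln ((\<Sum>j\<in>{1..I}. d j) - d i + x + eps i) - xi i * ell i * x"
proof -
  have sum_upd: "(\<Sum>j\<in>{1..I}. (d(i := x)) j) = (\<Sum>j\<in>{1..I}. d j) - d i + x"
    using assms by (intro sum_fun_upd) auto
  show ?thesis
    unfolding payoff_def sum_upd by (simp add: algebra_simps)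
qed

lemma nash_eq_nonneg:
  assumes "nash_eq I dmax eps xi ell d" "i \<in> {1..I}"
  shows "0 \<le> d i"
  using assms by (auto simp: nash_eq_def)

lemma nash_eq_no_profitable_deviation:
  assumes "nash_eq I dmax eps xi ell d" "i \<in> {1..I}" "0 \<le> x" "x \<le> dmax i"
  shows "ln ((\<Sum>j\<in>{1..I}. d j) - d i + x + eps i) - xi i * ell i * x
    \<le> ln ((\<Sum>j\<in>{1..I}. d j) + eps i) - xi i * ell i * d i"
proof -
  have "payoff I eps xi ell i (d(i := x)) \<le> payoff I eps xi ell i d"
    using assms by (auto simp: nash_eq_def)
  then show ?thesis
    unfolding payoff_fun_upd[OF assms(2)] by (simp add: payoff_def algebra_simps)
qed

lemma nash_eq_total_le_remaining_metric:
  assumes ne: "nash_eq I dmax eps xi ell d" and i: "i \<in> {1..I}"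
    and pos: "eps i > 0" "xi i * ell i > 0" and contributes: "d i > 0"
  shows "(\<Sum>j\<in>{1..I}. d j) \<le> remaining_metric eps xi ell i"
proof (rule field_le_epsilon)
  fix e :: real assume "e > 0"
  define S where "S = (\<Sum>j\<in>{1..I}. d j)"
  define c where "c = xi i * ell i"
  define t where "t = min e (d i)"
  have t: "0 < t" "t \<le> d i" "t \<le> e"
    using \<open>e > 0\<close> contributes by (auto simp: t_def)
  have "d i \<le> S"
    unfolding S_def using ne i by (intro member_le_sum) (auto intro: nash_eq_nonneg)
  then have a_pos: "S - t + eps i > 0"
    using t pos by linarith
  have "d i \<le> dmax i"
    using ne i by (auto simp: nash_eq_def)
  then have "c * t \<le> ln ((S - t + eps i) + t) - ln (S - t + eps i)"
    using nash_eq_no_profitable_deviation[OF ne i, of "d i - t"] t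
    by (simp add: S_def c_def algebra_simps)
  also have "\<dots> \<le> t / (S - t + eps i)"
    using a_pos t by (intro ln_add_diff_le) auto
  finally have "t * (c * (S - t + eps i)) \<le> t * 1"
    using a_pos by (simp add: field_simps)
  then have "c * (S - t + eps i) \<le> 1"
    using t by (simp only: mult_le_cancel_left_pos)
  then have "S - t + eps i \<le> 1 / c"
    using pos by (simp add: c_def pos_le_divide_eq mult.commute)
  then show "S \<le> remaining_metric eps xi ell i + e"
    using t by (simp add: remaining_metric_def c_def divide_inverse)
qed

lemma nash_eq_remaining_metric_le_total:
  assumes ne: "nash_eq I dmax eps xi ell d" and i: "i \<in> {1..I}"
    and pos: "eps i > 0" "xi i * ell i > 0" and below_cap: "d i < dmax i"
  shows "remaining_metric eps xi ell i \<le> (\<Sum>j\<in>{1..I}. d j)"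
proof (rule field_le_epsilon)
  fix e :: real assume "e > 0"
  define S where "S = (\<Sum>j\<in>{1..I}. d j)"
  define c where "c = xi i * ell i"
  define t where "t = min e (dmax i - d i)"
  have t: "0 < t" "d i + t \<le> dmax i" "t \<le> e"
    using \<open>e > 0\<close> below_cap by (auto simp: t_def)
  have "0 \<le> S"
    unfolding S_def using ne by (intro sum_nonneg) (auto intro: nash_eq_nonneg)
  then have a_pos: "S + eps i > 0"
    using pos by linarith
  have "t / (S + eps i + t) \<le> ln (S + eps i + t) - ln (S + eps i)"
    using a_pos t by (intro ln_add_diff_ge) auto
  also have "\<dots> \<le> c * t"
    using nash_eq_no_profitable_deviation[OF ne i, of "d i + t"] t nash_eq_nonneg[OF ne i]
    by (simp add: S_def c_def algebra_simps)
  finally have "t * 1 \<le> t * (c * (S + eps i + t))"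
    using a_pos t by (simp add: field_simps)
  then have "1 \<le> c * (S + eps i + t)"
    using t by (simp only: mult_le_cancel_left_pos)
  then have "1 / c \<le> S + eps i + t"
    using pos by (simp add: c_def pos_divide_le_eq mult.commute)
  then show "remaining_metric eps xi ell i \<le> S + e"
    using t by (simp add: remaining_metric_def c_def divide_inverse)
qed

theorem proposition4:
  fixes I :: nat and dmax :: "nat \<Rightarrow> real" and D :: real
    and eps xi ell d :: "nat \<Rightarrow> real"
  assumes "I \<ge> 2"
    and "\<And>i. i \<in> {1..I} \<Longrightarrow> dmax i > 0 \<and> eps i > 0 \<and> xi i > 0 \<and> ell i > 0"
    and "\<And>i. i \<in> {1..I} \<Longrightarrow> dmax i = D"
    and "\<And>i. i \<in> {1..<I} \<Longrightarrow> remaining_metric eps xi ell i < remaining_metric eps xi ell (i + 1)"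
    and "nash_eq I dmax eps xi ell d"
  shows "\<forall>i\<in>{1..<I}. d i \<le> d (i + 1)"
proof (rule ballI, rule ccontr)
  fix i assume i: "i \<in> {1..<I}" and "\<not> d i \<le> d (i + 1)"
  then have decreasing: "d (i + 1) < d i" by simp
  have i_mem: "i \<in> {1..I}" and succ_mem: "i + 1 \<in> {1..I}"
    using i by auto
  have "d i \<le> D"
    using assms(3,5) i_mem by (auto simp: nash_eq_def)
  then have "d (i + 1) < dmax (i + 1)"
    using decreasing assms(3)[OF succ_mem] by simp
  with assms(2,5) succ_mem
  have "remaining_metric eps xi ell (i + 1) \<le> (\<Sum>j\<in>{1..I}. d j)"
    by (intro nash_eq_remaining_metric_le_total) auto
  also have "d i > 0"
    using nash_eq_nonneg[OF assms(5) succ_mem] decreasing by simp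
  with assms(2,5) i_mem
  have "(\<Sum>j\<in>{1..I}. d j) \<le> remaining_metric eps xi ell i"
    by (intro nash_eq_total_le_remaining_metric) auto
  finally show False
    using assms(4)[OF i] by simp
qed

end
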